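(* Let $\{f(x;\theta)\}_{\theta\in\Theta}$ be an affine exponential family (defined in the context) with log-normalizer $F$. Let $p(x)=f(x;\theta)$ and $q_u(x)=f(x;\theta_u)$, $u=1,\dots,l$, be members of this family, let $w_1,\dots,w_l>0$ with $\sum_{u=1}^l w_u=1$, and let $\lambda\neq 0$ and an integer $i\geq 2$ be given. Then the power chi pseudo-distance between $p$ and the mixture $\sum_{u=1}^l w_uq_u$ is finite and given by the closed-form finite expression $$ \chi_{i,\lambda}^\pm\Big(p:\sum_{u=1}^{l} w_u q_u\Big)=\sum_{s=0}^i \binom{i}{s}(-\lambda)^{i-s}\sum_{\substack{\alpha_1+\dots+\alpha_l=s\\ \alpha_u\in\mathbb{N}\cup\{0\}}}\binom{s}{\alpha_1,\ldots,\alpha_l}\Big(\prod_{u=1}^l w_u^{\alpha_u}\Big)\exp\Big(F\Big((1-s)\theta+\sum_{u=1}^l\alpha_u\theta_u\Big)-\Big((1-s)F(\theta)+\sum_{u=1}^l\alpha_uF(\theta_u)\Big)\Big). $$ In particular, it can be computed in closed form from $F$, the parameters, the weights and $\lambda$.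
   Context: Let $\mu$ be a $\sigma$-finite positive base measure on a measurable space $\mathcal{X}$. An exponential family is a set of probability densities (w.r.t. $\mu$) of the form $f(x;\theta)=\exp(t(x)^\top\theta-F(\theta)+k(x))\,1_{\mathcal{X}}(x)$, with sufficient statistic $t:\mathcal{X}\to\mathbb{R}^D$, carrier term $k$, natural parameter $\theta$ in the natural parameter space $\Theta=\{\theta\in\mathbb{R}^D:\int \exp(t(x)^\top\theta+k(x))\,d\mu(x)<\infty\}$, and log-normalizer $F(\theta)=\log\int\exp(t(x)^\top\theta+k(x))\,d\mu(x)$. It is called an affine exponential family if its natural parameter space $\Theta$ is affine (closed under affine combinations, e.g. $\Theta=\mathbb{R}^D$), as for the Poisson, categorical, isotropic Gaussian and von Mises–Fisher families. For densities $p,r$ and $\lambda\neq0$, integer $i\ge2$, the power chi pseudo-distance is $\chi_{i,\lambda}^\pm(p:r)=\int \frac{(r(x)-\lambda p(x))^i}{p(x)^{i-1}}\,d\mu(x)$; here $(-\lambda)^j$ is the usual integer power. $\binom{s}{\alpha_1,\ldots,\alpha_l}$ denotes the multinomial coefficient. *)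

theory Defs
  imports "HOL-Analysis.Analysis"
begin

text \<open>Exponential family on a measure space M with sufficient statistic
  t : space M -> R^D (here real^'n) and carrier term k.\<close>

definition natparam :: "'a measure \<Rightarrow> ('a \<Rightarrow> real^'n) \<Rightarrow> ('a \<Rightarrow> real) \<Rightarrow> (real^'n) set" where
  "natparam M t k = {\<theta>. (\<integral>\<^sup>+ x. ennreal (exp (t x \<bullet> \<theta> + k x)) \<partial>M) < \<infinity>}"

definition lognorm :: "'a measure \<Rightarrow> ('a \<Rightarrow> real^'n) \<Rightarrow> ('a \<Rightarrow> real) \<Rightarrow> real^'n \<Rightarrow> real" where
  "lognorm M t k \<theta> = ln (\<integral> x. exp (t x \<bullet> \<theta> + k x) \<partial>M)"

definition expfam_density :: "'a measure \<Rightarrow> ('a \<Rightarrow> real^'n) \<Rightarrow> ('a \<Rightarrow> real) \<Rightarrow> real^'n \<Rightarrow> 'a \<Rightarrow> real" where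
  "expfam_density M t k \<theta> x = exp (t x \<bullet> \<theta> - lognorm M t k \<theta> + k x) * indicator (space M) x"

definition power_chi :: "'a measure \<Rightarrow> nat \<Rightarrow> real \<Rightarrow> ('a \<Rightarrow> real) \<Rightarrow> ('a \<Rightarrow> real) \<Rightarrow> real" where
  "power_chi M i lam p r = (\<integral> x. (r x - lam * p x) ^ i / p x ^ (i - 1) \<partial>M)"

definition multinomial_coeff :: "nat \<Rightarrow> nat \<Rightarrow> (nat \<Rightarrow> nat) \<Rightarrow> nat" where
  "multinomial_coeff s l \<alpha> = fact s div (\<Prod>u=1..l. fact (\<alpha> u))"

end

theory Submission
  imports Defs
begin

text \<open>Expanding \<open>(\<Sum>u. w u * q u - \<lambda> * p) ^ i / p ^ (i - 1)\<close> by the binomial and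
  multinomial theorems gives a finite sum of terms \<open>p ^ (1 - s) * (\<Prod>u. q u ^ \<alpha> u)\<close>. In an
  exponential family such a product is a constant multiple of the density with natural parameter
  \<open>(1 - s) \<theta> + (\<Sum>u. \<alpha> u \<theta>s u)\<close>, the constant being the exponential of the
  log-normaliser difference in the claim. That parameter is an affine combination of natural
  parameters, hence lies in the affine natural parameter space, so its density integrates to 1.\<close>

definition weak_compositions :: "'b set \<Rightarrow> nat \<Rightarrow> ('b \<Rightarrow> nat) set" where
  "weak_compositions A s = {\<alpha>. (\<forall>u. u \<notin> A \<longrightarrow> \<alpha> u = 0) \<and> sum \<alpha> A = s}"

lemma finite_weak_compositions:
  assumes "finite A"
  shows "finite (weak_compositions A s)"
proof -
  have "weak_compositions A s \<subseteq> {f. \<forall>x. (x \<in> A \<longrightarrow> f x \<in> {0..s}) \<and> (x \<notin> A \<longrightarrow> f x = 0)}"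
    unfolding weak_compositions_def using assms by (auto intro: member_le_sum)
  then show ?thesis
    using finite_set_of_finite_funs[OF assms, of "{0..s}" 0] finite_subset by blast
qed

lemma weak_compositions_empty: "weak_compositions {} s = (if s = 0 then {\<lambda>_. 0} else {})"
  by (auto simp: weak_compositions_def)

lemma sum_weak_compositions_insert:
  assumes "finite A" "a \<notin> A"
  shows "(\<Sum>\<alpha>\<in>weak_compositions (insert a A) s. g \<alpha>)
       = (\<Sum>j\<le>s. \<Sum>\<beta>\<in>weak_compositions A (s - j). g (\<beta>(a := j)))"
proof -
  have sum_upd: "(\<Sum>u\<in>A. if u = a then j else \<beta> u) = sum \<beta> A" for \<beta> :: "_ \<Rightarrow> nat" and j
    using assms(2) by (intro sum.cong) auto
  have "(\<Sum>j\<le>s. \<Sum>\<beta>\<in>weak_compositions A (s - j). g (\<beta>(a := j)))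
      = (\<Sum>(j, \<beta>)\<in>(SIGMA j:{..s}. weak_compositions A (s - j)). g (\<beta>(a := j)))"
    by (rule sum.Sigma) (auto simp: finite_weak_compositions assms)
  also have "\<dots> = (\<Sum>\<alpha>\<in>weak_compositions (insert a A) s. g \<alpha>)"
  proof (rule sum.reindex_bij_witness[where i="\<lambda>\<alpha>. (\<alpha> a, \<alpha>(a := 0))"])
    fix \<alpha> assume "\<alpha> \<in> weak_compositions (insert a A) s"
    then show "(\<alpha> a, \<alpha>(a := 0)) \<in> (SIGMA j:{..s}. weak_compositions A (s - j))"
      using assms by (auto simp: weak_compositions_def sum_upd)
  next
    fix p assume "p \<in> (SIGMA j:{..s}. weak_compositions A (s - j))"
    then show "(case p of (j, \<beta>) \<Rightarrow> \<beta>(a := j)) \<in> weak_compositions (insert a A) s"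
      and "((case p of (j, \<beta>) \<Rightarrow> \<beta>(a := j)) a, (case p of (j, \<beta>) \<Rightarrow> \<beta>(a := j))(a := 0)) = p"
      using assms by (auto simp: weak_compositions_def sum_upd fun_eq_iff)
  qed auto
  finally show ?thesis by simp
qed

lemma prod_fact_dvd_fact_sum:
  "finite A \<Longrightarrow> (\<Prod>u\<in>A. fact (\<beta> u) :: nat) dvd fact (sum \<beta> A)"
proof (induction A rule: finite_induct)
  case (insert a A)
  have "fact (\<beta> a) * (\<Prod>u\<in>A. fact (\<beta> u)) dvd fact (\<beta> a) * (fact (sum \<beta> A) :: nat)"
    using insert by (simp add: mult_dvd_mono)
  also have "\<dots> dvd fact (\<beta> a + sum \<beta> A)"
    by (rule fact_fact_dvd_fact)
  finally show ?case
    using insert by simp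
qed simp

lemma real_multinomial_coeff:
  assumes "\<alpha> \<in> weak_compositions {1..l} s"
  shows "real (multinomial_coeff s l \<alpha>) = fact s / (\<Prod>u=1..l. fact (\<alpha> u))"
  using assms prod_fact_dvd_fact_sum[of "{1..l}" \<alpha>]
  by (auto simp: multinomial_coeff_def weak_compositions_def real_of_nat_div of_nat_prod)

theorem multinomial_theorem:
  fixes x :: "'b \<Rightarrow> 'a::field_char_0"
  assumes "finite A"
  shows "(\<Sum>u\<in>A. x u) ^ s
       = (\<Sum>\<alpha>\<in>weak_compositions A s. fact s / (\<Prod>u\<in>A. fact (\<alpha> u)) * (\<Prod>u\<in>A. x u ^ \<alpha> u))"
  using assms
proof (induction A arbitrary: s rule: finite_induct)
  case empty
  then show ?case by (simp add: weak_compositions_empty)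
next
  case (insert a A)
  let ?coeff = "\<lambda>\<alpha>. fact s / (\<Prod>u\<in>insert a A. fact (\<alpha> u)) * (\<Prod>u\<in>insert a A. x u ^ \<alpha> u) :: 'a"
  have summand: "of_nat (s choose j) * x a ^ j
        * (fact (s - j) / (\<Prod>u\<in>A. fact (\<beta> u)) * (\<Prod>u\<in>A. x u ^ \<beta> u)) = ?coeff (\<beta>(a := j))"
    if "j \<le> s" for j \<beta>
  proof -
    have "(\<Prod>u\<in>A. fact ((\<beta>(a := j)) u) :: 'a) = (\<Prod>u\<in>A. fact (\<beta> u))"
      "(\<Prod>u\<in>A. x u ^ (\<beta>(a := j)) u) = (\<Prod>u\<in>A. x u ^ \<beta> u)"
      using insert.hyps by (auto intro: prod.cong)
    then have "(\<Prod>u\<in>insert a A. fact ((\<beta>(a := j)) u) :: 'a) = fact j * (\<Prod>u\<in>A. fact (\<beta> u))"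
      "(\<Prod>u\<in>insert a A. x u ^ (\<beta>(a := j)) u) = x a ^ j * (\<Prod>u\<in>A. x u ^ \<beta> u)"
      using insert.hyps by simp_all
    moreover have "(of_nat (s choose j) :: 'a) = fact s / (fact j * fact (s - j))"
      using that by (simp add: binomial_fact)
    moreover have "(\<Prod>u\<in>A. fact (\<beta> u) :: 'a) \<noteq> 0"
      by (simp add: prod_zero_iff insert.hyps)
    ultimately show ?thesis
      by (simp add: field_simps)
  qed
  have "(\<Sum>u\<in>insert a A. x u) ^ s = (x a + (\<Sum>u\<in>A. x u)) ^ s"
    using insert.hyps by simp
  also have "\<dots> = (\<Sum>j\<le>s. of_nat (s choose j) * x a ^ j * (\<Sum>u\<in>A. x u) ^ (s - j))"
    by (rule binomial_ring)
  also have "\<dots> = (\<Sum>j\<le>s. \<Sum>\<beta>\<in>weak_compositions A (s - j). of_nat (s choose j) * x a ^ j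
      * (fact (s - j) / (\<Prod>u\<in>A. fact (\<beta> u)) * (\<Prod>u\<in>A. x u ^ \<beta> u)))"
    by (simp only: insert.IH sum_distrib_left)
  also have "\<dots> = (\<Sum>j\<le>s. \<Sum>\<beta>\<in>weak_compositions A (s - j). ?coeff (\<beta>(a := j)))"
    by (intro sum.cong refl summand) simp
  also have "\<dots> = (\<Sum>\<alpha>\<in>weak_compositions (insert a A) s. ?coeff \<alpha>)"
    by (rule sum_weak_compositions_insert[symmetric]) (use insert.hyps in auto)
  finally show ?case .
qed

lemma affine_sum_combination:
  fixes S :: "'b::real_vector set"
  assumes "affine S" "\<theta> \<in> S" "finite A" "\<And>u. u \<in> A \<Longrightarrow> \<theta>s u \<in> S"
  shows "(1 - sum c A) *\<^sub>R \<theta> + (\<Sum>u\<in>A. c u *\<^sub>R \<theta>s u) \<in> S"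
proof -
  have "\<theta> + (\<Sum>u\<in>A. c u *\<^sub>R (\<theta>s u - \<theta>)) \<in> S"
    using assms(3,4)
  proof (induction A rule: finite_induct)
    case (insert a A)
    have "(\<theta> + (\<Sum>u\<in>A. c u *\<^sub>R (\<theta>s u - \<theta>))) + c a *\<^sub>R (\<theta>s a - \<theta>) \<in> S"
      by (rule mem_affine_3_minus) (use insert assms(1,2) in auto)
    then show ?case
      using insert.hyps by (simp add: algebra_simps)
  qed (use assms(2) in simp)
  then show ?thesis
    by (simp add: algebra_simps scaleR_sum_left sum_subtractf)
qed

lemma has_bochner_integral_expfam_density:
  assumes "emeasure M (space M) \<noteq> 0" "t \<in> borel_measurable M" "k \<in> borel_measurable M"
    and "\<theta> \<in> natparam M t k"
  shows "has_bochner_integral M (expfam_density M t k \<theta>) 1"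
proof -
  define e where "e x = exp (t x \<bullet> \<theta> + k x)" for x
  define Z where "Z = (\<integral>x. e x \<partial>M)"
  have "e \<in> borel_measurable M"
    unfolding e_def using assms(2,3) by measurable
  then have integrable: "integrable M e"
    by (rule integrableI_nonneg) (use assms(4) in \<open>auto simp: natparam_def e_def\<close>)
  have "Z \<noteq> 0"
  proof
    assume "Z = 0"
    moreover have "AE x in M. 0 \<le> e x"
      by (simp add: e_def)
    ultimately have "AE x in M. e x = 0"
      using integral_nonneg_eq_0_iff_AE[OF integrable] by (simp add: Z_def)
    then have "AE x in M. False"
      by (simp add: e_def)
    with assms(1) show False
      using ae_filter_eq_bot_iff eventually_False by metis
  qed
  moreover have "Z \<ge> 0"
    unfolding Z_def e_def by (intro integral_nonneg_AE) auto
  ultimately have "Z > 0"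
    by linarith
  then have "expfam_density M t k \<theta> x = e x / Z" if "x \<in> space M" for x
    using that by (simp add: expfam_density_def lognorm_def e_def Z_def exp_diff exp_add)
  moreover have "has_bochner_integral M (\<lambda>x. e x / Z) (Z / Z)"
    using integrable
    by (intro has_bochner_integral_divide_zero) (simp add: Z_def has_bochner_integral_iff)
  ultimately show ?thesis
    using \<open>Z \<noteq> 0\<close> by (simp cong: has_bochner_integral_cong)
qed

lemma power_chi_integrand_expansion:
  fixes p lam :: "'a::field_char_0" and q w :: "'b \<Rightarrow> 'a"
  assumes "finite A"
  shows "((\<Sum>u\<in>A. w u * q u) - lam * p) ^ i / p ^ (i - 1)
       = (\<Sum>s=0..i. of_nat (i choose s) * (- lam) ^ (i - s) *
           (\<Sum>\<alpha>\<in>weak_compositions A s. fact s / (\<Prod>u\<in>A. fact (\<alpha> u)) * (\<Prod>u\<in>A. w u ^ \<alpha> u)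
              * (p ^ (i - s) / p ^ (i - 1) * (\<Prod>u\<in>A. q u ^ \<alpha> u))))"
proof -
  have "((\<Sum>u\<in>A. w u * q u) - lam * p) ^ i = ((\<Sum>u\<in>A. w u * q u) + (- lam) * p) ^ i"
    by simp
  also have "\<dots> = (\<Sum>s=0..i. of_nat (i choose s) * (\<Sum>u\<in>A. w u * q u) ^ s * ((- lam) * p) ^ (i - s))"
    unfolding binomial_ring atLeast0AtMost ..
  also have "\<dots> = (\<Sum>s=0..i. of_nat (i choose s) * (\<Sum>u\<in>A. w u * q u) ^ s * ((- lam) ^ (i - s) * p ^ (i - s)))"
    by (simp only: power_mult_distrib)
  finally show ?thesis
    using assms
    by (simp add: multinomial_theorem power_mult_distrib prod.distrib sum_divide_distrib
        sum_distrib_left sum_distrib_right mult_ac)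
qed

lemma expfam_density_power_product:
  fixes \<theta> :: "real^'n" and \<theta>s :: "'b \<Rightarrow> real^'n" and \<alpha> :: "'b \<Rightarrow> nat"
  assumes "x \<in> space M" "finite A" "sum \<alpha> A = s" "s \<le> i" "1 \<le> i"
  defines "\<theta>\<alpha> \<equiv> (1 - real s) *\<^sub>R \<theta> + (\<Sum>u\<in>A. real (\<alpha> u) *\<^sub>R \<theta>s u)"
  shows "expfam_density M t k \<theta> x ^ (i - s) / expfam_density M t k \<theta> x ^ (i - 1)
           * (\<Prod>u\<in>A. expfam_density M t k (\<theta>s u) x ^ \<alpha> u)
       = exp (lognorm M t k \<theta>\<alpha> - ((1 - real s) * lognorm M t k \<theta>
                + (\<Sum>u\<in>A. real (\<alpha> u) * lognorm M t k (\<theta>s u))))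
           * expfam_density M t k \<theta>\<alpha> x"
proof -
  let ?F = "lognorm M t k"
  define a where "a \<theta>' = t x \<bullet> \<theta>' - ?F \<theta>' + k x" for \<theta>'
  have density: "expfam_density M t k \<theta>' x = exp (a \<theta>')" for \<theta>'
    using assms(1) by (simp add: expfam_density_def a_def)
  have "real s = (\<Sum>u\<in>A. real (\<alpha> u))"
    by (simp add: assms(3)[symmetric])
  then have "(1 - real s) * a \<theta> + (\<Sum>u\<in>A. real (\<alpha> u) * a (\<theta>s u))
      = ?F \<theta>\<alpha> - ((1 - real s) * ?F \<theta> + (\<Sum>u\<in>A. real (\<alpha> u) * ?F (\<theta>s u))) + a \<theta>\<alpha>"
    by (simp add: a_def \<theta>\<alpha>_def inner_add_right inner_sum_right algebra_simps
        sum.distrib sum_subtractf sum_distrib_left sum_distrib_right)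
  moreover have "exp (a \<theta>) ^ (i - s) / exp (a \<theta>) ^ (i - 1) = exp ((1 - real s) * a \<theta>)"
    using assms(4,5) by (simp add: of_nat_diff algebra_simps flip: exp_of_nat_mult exp_diff)
  moreover have "(\<Prod>u\<in>A. exp (a (\<theta>s u)) ^ \<alpha> u) = exp (\<Sum>u\<in>A. real (\<alpha> u) * a (\<theta>s u))"
    using assms(2) by (simp add: exp_sum flip: exp_of_nat_mult)
  ultimately show ?thesis
    by (simp add: density flip: exp_add)
qed

lemma has_bochner_integral_power_chi_mixture:
  fixes M :: "'a measure" and t :: "'a \<Rightarrow> real^'n" and \<theta>s :: "'b \<Rightarrow> real^'n"
  assumes "emeasure M (space M) \<noteq> 0" "t \<in> borel_measurable M" "k \<in> borel_measurable M"
    and "affine (natparam M t k)" "\<theta> \<in> natparam M t k" "\<And>u. u \<in> A \<Longrightarrow> \<theta>s u \<in> natparam M t k"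
    and "finite A" "1 \<le> i"
  shows "has_bochner_integral M
     (\<lambda>x. ((\<Sum>u\<in>A. w u * expfam_density M t k (\<theta>s u) x) - lam * expfam_density M t k \<theta> x) ^ i
          / expfam_density M t k \<theta> x ^ (i - 1))
     (\<Sum>s=0..i. of_nat (i choose s) * (- lam) ^ (i - s) *
        (\<Sum>\<alpha>\<in>weak_compositions A s. fact s / (\<Prod>u\<in>A. fact (\<alpha> u)) * (\<Prod>u\<in>A. w u ^ \<alpha> u) *
           exp (lognorm M t k ((1 - real s) *\<^sub>R \<theta> + (\<Sum>u\<in>A. real (\<alpha> u) *\<^sub>R \<theta>s u))
                - ((1 - real s) * lognorm M t k \<theta> + (\<Sum>u\<in>A. real (\<alpha> u) * lognorm M t k (\<theta>s u))))))"
proof -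
  let ?f = "expfam_density M t k"
  define \<theta>\<alpha> where "\<theta>\<alpha> s \<alpha> = (1 - real s) *\<^sub>R \<theta> + (\<Sum>u\<in>A. real (\<alpha> u) *\<^sub>R \<theta>s u)"
    for s and \<alpha> :: "'b \<Rightarrow> nat"
  define E where "E s \<alpha> = exp (lognorm M t k (\<theta>\<alpha> s \<alpha>)
      - ((1 - real s) * lognorm M t k \<theta> + (\<Sum>u\<in>A. real (\<alpha> u) * lognorm M t k (\<theta>s u))))"
    for s and \<alpha> :: "'b \<Rightarrow> nat"
  have integrand: "((\<Sum>u\<in>A. w u * ?f (\<theta>s u) x) - lam * ?f \<theta> x) ^ i / ?f \<theta> x ^ (i - 1)
      = (\<Sum>s=0..i. of_nat (i choose s) * (- lam) ^ (i - s) *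
          (\<Sum>\<alpha>\<in>weak_compositions A s. fact s / (\<Prod>u\<in>A. fact (\<alpha> u)) * (\<Prod>u\<in>A. w u ^ \<alpha> u)
             * (E s \<alpha> * ?f (\<theta>\<alpha> s \<alpha>) x)))"
    if "x \<in> space M" for x
    unfolding power_chi_integrand_expansion[OF assms(7)] E_def \<theta>\<alpha>_def
    using that assms(7,8)
    by (intro sum.cong refl arg_cong2[where f="(*)"] expfam_density_power_product)
      (auto simp: weak_compositions_def)
  have natparam: "\<theta>\<alpha> s \<alpha> \<in> natparam M t k" if "\<alpha> \<in> weak_compositions A s" for s \<alpha>
  proof -
    have "(\<Sum>u\<in>A. real (\<alpha> u)) = real s"
      using that by (simp add: weak_compositions_def flip: of_nat_sum)
    then show ?thesis
      using affine_sum_combination[OF assms(4,5,7), where c="\<lambda>u. real (\<alpha> u)" and \<theta>s=\<theta>s]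
      by (simp add: \<theta>\<alpha>_def assms(6))
  qed
  have "has_bochner_integral M (\<lambda>x. \<Sum>s=0..i. of_nat (i choose s) * (- lam) ^ (i - s) *
          (\<Sum>\<alpha>\<in>weak_compositions A s. fact s / (\<Prod>u\<in>A. fact (\<alpha> u)) * (\<Prod>u\<in>A. w u ^ \<alpha> u)
             * (E s \<alpha> * ?f (\<theta>\<alpha> s \<alpha>) x)))
      (\<Sum>s=0..i. of_nat (i choose s) * (- lam) ^ (i - s) *
          (\<Sum>\<alpha>\<in>weak_compositions A s. fact s / (\<Prod>u\<in>A. fact (\<alpha> u)) * (\<Prod>u\<in>A. w u ^ \<alpha> u)
             * (E s \<alpha> * 1)))"
    by (intro has_bochner_integral_sum has_bochner_integral_mult_right
        has_bochner_integral_expfam_density natparam) (use assms(1-3) in auto)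
  then show ?thesis
    by (rule has_bochner_integral_cong[THEN iffD1, OF refl, rotated 2])
      (use integrand in \<open>simp_all add: E_def \<theta>\<alpha>_def\<close>)
qed

theorem theorem1:
  fixes M :: "'a measure" and t :: "'a \<Rightarrow> real^'n" and k :: "'a \<Rightarrow> real"
    and \<theta> :: "real^'n" and \<theta>s :: "nat \<Rightarrow> real^'n" and w :: "nat \<Rightarrow> real"
    and l i :: nat and lam :: real
  assumes "sigma_finite_measure M"
    and "emeasure M (space M) \<noteq> 0"
    and "t \<in> borel_measurable M" and "k \<in> borel_measurable M"
    and "affine (natparam M t k)"
    and "\<theta> \<in> natparam M t k"
    and "\<forall>u\<in>{1..l}. \<theta>s u \<in> natparam M t k"
    and "\<forall>u\<in>{1..l}. w u > 0" and "(\<Sum>u=1..l. w u) = 1"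
    and "lam \<noteq> 0" and "i \<ge> 2"
  shows "integrable M (\<lambda>x. ((\<Sum>u=1..l. w u * expfam_density M t k (\<theta>s u) x)
                               - lam * expfam_density M t k \<theta> x) ^ i
                             / expfam_density M t k \<theta> x ^ (i - 1))
    \<and> power_chi M i lam (expfam_density M t k \<theta>)
        (\<lambda>x. \<Sum>u=1..l. w u * expfam_density M t k (\<theta>s u) x)
      = (\<Sum>s=0..i. real (i choose s) * (- lam) ^ (i - s) *
          (\<Sum>\<alpha>\<in>{\<alpha>::nat\<Rightarrow>nat. (\<forall>u. u \<notin> {1..l} \<longrightarrow> \<alpha> u = 0) \<and> (\<Sum>u=1..l. \<alpha> u) = s}.
             real (multinomial_coeff s l \<alpha>) * (\<Prod>u=1..l. w u ^ \<alpha> u) *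
             exp (lognorm M t k ((1 - real s) *\<^sub>R \<theta> + (\<Sum>u=1..l. real (\<alpha> u) *\<^sub>R \<theta>s u))
                  - ((1 - real s) * lognorm M t k \<theta> + (\<Sum>u=1..l. real (\<alpha> u) * lognorm M t k (\<theta>s u))))))"
proof -
  have "\<And>u. u \<in> {1..l} \<Longrightarrow> \<theta>s u \<in> natparam M t k" "1 \<le> i"
    using assms(7,11) by auto
  from has_bochner_integral_power_chi_mixture
      [OF assms(2-6) this(1) finite_atLeastAtMost this(2), where w=w and lam=lam]
  show ?thesis
    unfolding has_bochner_integral_iff power_chi_def weak_compositions_def[symmetric]
    by (auto intro!: sum.cong simp: real_multinomial_coeff)
qed

end
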